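(* Let $\Gamma$ be a temporal language preserved by $\mathrm{peak}$. If $\Gamma$ pp-defines neither $\mathrm{EqXor}=\{(x,y,z)\in\mathbb{Q}^3\mid x=y\vee x=z\}$ nor $\mathrm{EqOr}_n=\{(x_1,\dots,x_n)\in\mathbb{Q}^n\mid\bigvee_{i\neq j}x_i=x_j\}$ for any $n\ge3$, then $\Gamma$ is preserved by all permutations of $\mathbb{Q}$.
   Context: A temporal language is a relational structure with domain $\mathbb{Q}$ and finite signature whose relations are first-order definable in $(\mathbb{Q};<)$. $\Gamma$ pp-defines $R$ if $R$ is definable by a primitive positive formula (existentially quantified conjunction of atomic formulas) over the signature of $\Gamma$. A unary operation $f$ preserves $\Gamma$ if applying $f$ componentwise maps each relation of $\Gamma$ into itself. $\mathrm{peak}(x)=-1$ for $x\neq0$ and $1$ for $x=0$. *)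

theory Defs
  imports Complex_Main
begin

datatype fo = FLt nat nat | FEq nat nat | FNot fo | FAnd fo fo | FEx nat fo

fun fo_holds :: "(nat \<Rightarrow> rat) \<Rightarrow> fo \<Rightarrow> bool" where
  "fo_holds s (FLt x y) = (s x < s y)"
| "fo_holds s (FEq x y) = (s x = s y)"
| "fo_holds s (FNot \<phi>) = (\<not> fo_holds s \<phi>)"
| "fo_holds s (FAnd \<phi> \<psi>) = (fo_holds s \<phi> \<and> fo_holds s \<psi>)"
| "fo_holds s (FEx x \<phi>) = (\<exists>a. fo_holds (s(x := a)) \<phi>)"

fun fo_free :: "fo \<Rightarrow> nat set" where
  "fo_free (FLt x y) = {x, y}"
| "fo_free (FEq x y) = {x, y}"
| "fo_free (FNot \<phi>) = fo_free \<phi>"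
| "fo_free (FAnd \<phi> \<psi>) = fo_free \<phi> \<union> fo_free \<psi>"
| "fo_free (FEx x \<phi>) = fo_free \<phi> - {x}"

definition fo_definable :: "nat \<Rightarrow> rat list set \<Rightarrow> bool" where
  "fo_definable n R \<longleftrightarrow> (\<exists>\<phi>. fo_free \<phi> \<subseteq> {..<n} \<and>
      R = {xs. length xs = n \<and> fo_holds (\<lambda>i. xs ! i) \<phi>})"

text \<open>A tstructure with domain Q and finite signature: a list of (arity, relation) pairs;
  the i-th relation symbol is interpreted by the i-th entry.\<close>
type_synonym tstructure = "(nat \<times> rat list set) list"

definition temporal_language :: "tstructure \<Rightarrow> bool" where
  "temporal_language \<Gamma> \<longleftrightarrow> (\<forall>(k, R) \<in> set \<Gamma>.
      (\<forall>t \<in> R. length t = k) \<and> fo_definable k R)"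

text \<open>Primitive positive definitions, in prenex form: variables 0..<n are free,
  variables n..<m are existentially quantified; atoms are relation atoms
  (relation index, argument variables) and equality atoms.\<close>
definition pp_defines :: "tstructure \<Rightarrow> nat \<Rightarrow> rat list set \<Rightarrow> bool" where
  "pp_defines \<Gamma> n R \<longleftrightarrow> (\<exists>m atoms eqs. n \<le> m \<and>
      (\<forall>(i, vs) \<in> set atoms. i < length \<Gamma> \<and> length vs = fst (\<Gamma> ! i) \<and> (\<forall>v \<in> set vs. v < m)) \<and>
      (\<forall>(u, v) \<in> set eqs. u < m \<and> v < m) \<and>
      R = {xs. length xs = n \<and> (\<exists>ys. length ys = m - n \<and>
              (\<forall>(i, vs) \<in> set atoms. map (\<lambda>v. (xs @ ys) ! v) vs \<in> snd (\<Gamma> ! i)) \<and>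
              (\<forall>(u, v) \<in> set eqs. (xs @ ys) ! u = (xs @ ys) ! v))})"

definition preserves :: "(rat \<Rightarrow> rat) \<Rightarrow> tstructure \<Rightarrow> bool" where
  "preserves f \<Gamma> \<longleftrightarrow> (\<forall>(k, R) \<in> set \<Gamma>. \<forall>t \<in> R. map f t \<in> R)"

definition peak :: "rat \<Rightarrow> rat" where
  "peak x = (if x = 0 then 1 else -1)"

definition EqXor :: "rat list set" where
  "EqXor = {[x, y, z] | x y z. x = y \<or> x = z}"

definition EqOr :: "nat \<Rightarrow> rat list set" where
  "EqOr n = {xs. length xs = n \<and> (\<exists>i j. i < n \<and> j < n \<and> i \<noteq> j \<and> xs ! i = xs ! j)}"

end

theory Submission
  imports Defs
begin

(* Let R be a relation of the language; it is invariant under order automorphisms and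
   under peak. One shows, by induction on the arity n, that every relation T defined
   by a conjunction of R-atoms is closed under all injective maps of its tuples. A
   tuple with a repeated entry is handled by identifying coordinates, which lowers
   the arity. Composing peak with automorphisms shows that every two-valued pattern
   of a tuple of T stays in T. So suppose a tuple with distinct entries lies in T but
   another such tuple does not (then n >= 3). If all tuples with a repetition lie in
   T, intersecting T over all substitutions of its variables gives EqOr n. If some
   two-valued tuple is missing, one with the most entries equal to one of its values
   gives EqXor by a substitution in three variables. Otherwise a missing tuple with a
   repetition and as few values m as possible (m >= 3) gives EqOr m. Each outcome is
   a pp-definition in the language, which the hypotheses forbid. *)

lemma finite_fo_free: "finite (fo_free \<phi>)"
  by (induction \<phi>) auto

lemma dense_between_finite:
  fixes L U :: "'a::{dense_linorder, no_top, no_bot} set"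
  assumes "finite L" "finite U" "\<forall>l\<in>L. \<forall>u\<in>U. l < u"
  obtains a where "\<forall>l\<in>L. l < a" "\<forall>u\<in>U. a < u"
proof -
  obtain lo where "lo < Min U" using lt_ex by blast
  then have lo: "\<forall>u\<in>U. lo < u" using Min_le[OF assms(2)] by (meson less_le_trans)
  obtain hi where "Max L < hi" using gt_ex by blast
  then have hi: "\<forall>l\<in>L. l < hi" using Max_ge[OF assms(1)] by (meson le_less_trans)
  show thesis
  proof (cases "L = {} \<or> U = {}")
    case True
    then show thesis using that lo hi by blast
  next
    case False
    then have "Max L < Min U" using assms by simp
    then obtain a where "Max L < a" "a < Min U" using dense by blast
    then have "\<forall>l\<in>L. l < a" "\<forall>u\<in>U. a < u"
      using Max_ge[OF assms(1)] Min_le[OF assms(2)] by (meson le_less_trans less_le_trans)+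
    then show thesis using that by blast
  qed
qed

lemma order_equiv_extend:
  fixes s s' :: "'b \<Rightarrow> 'a::{dense_linorder, no_top, no_bot}"
  assumes "finite V" "x \<notin> V" and equiv: "\<forall>i\<in>V. \<forall>j\<in>V. s i < s j \<longleftrightarrow> s' i < s' j"
  obtains a' where "\<forall>i\<in>insert x V. \<forall>j\<in>insert x V.
    (s(x := a)) i < (s(x := a)) j \<longleftrightarrow> (s'(x := a')) i < (s'(x := a')) j"
proof -
  obtain a' where a': "\<forall>i\<in>V. (s i < a \<longleftrightarrow> s' i < a') \<and> (a < s i \<longleftrightarrow> a' < s' i)"
  proof (cases "\<exists>i\<in>V. s i = a")
    case True
    then obtain i0 where "i0 \<in> V" "s i0 = a" by blast
    have "\<forall>i\<in>V. (s i < a \<longleftrightarrow> s' i < s' i0) \<and> (a < s i \<longleftrightarrow> s' i0 < s' i)"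
      using equiv \<open>i0 \<in> V\<close> by (simp add: \<open>s i0 = a\<close>[symmetric])
    then show thesis by (rule that)
  next
    case False
    let ?L = "s' ` {i\<in>V. s i < a}" and ?U = "s' ` {i\<in>V. a < s i}"
    have sep: "\<forall>l\<in>?L. \<forall>u\<in>?U. l < u"
    proof (intro ballI)
      fix l u assume "l \<in> ?L" "u \<in> ?U"
      then obtain i j where ij: "i \<in> V" "j \<in> V" "s i < a" "a < s j" "l = s' i" "u = s' j"
        by blast
      have "s i < s j" using ij(3,4) by (rule less_trans)
      then show "l < u" using equiv ij by simp
    qed
    have "finite ?L" "finite ?U" using \<open>finite V\<close> by simp_all
    then obtain a' where "\<forall>l\<in>?L. l < a'" "\<forall>u\<in>?U. a' < u"
      using dense_between_finite sep by blast
    then have "\<forall>i\<in>V. (s i < a \<longrightarrow> s' i < a') \<and> (a < s i \<longrightarrow> a' < s' i)" by auto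
    then have "\<forall>i\<in>V. (s i < a \<longleftrightarrow> s' i < a') \<and> (a < s i \<longleftrightarrow> a' < s' i)"
      using False by (metis linorder_neqE order.asym)
    then show thesis by (rule that)
  qed
  show thesis
  proof (rule that[of a'], intro ballI)
    fix i j assume "i \<in> insert x V" "j \<in> insert x V"
    then consider "i = x" "j = x" | "i = x" "j \<in> V" | "i \<in> V" "j = x" | "i \<in> V" "j \<in> V"
      by blast
    then show "(s(x := a)) i < (s(x := a)) j \<longleftrightarrow> (s'(x := a')) i < (s'(x := a')) j"
      using a' equiv \<open>x \<notin> V\<close> by cases (auto simp: fun_upd_other)
  qed
qed

lemma fo_holds_order_invariant:
  assumes "\<forall>i\<in>fo_free \<phi>. \<forall>j\<in>fo_free \<phi>. s i < s j \<longleftrightarrow> s' i < s' j"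
  shows "fo_holds s \<phi> \<longleftrightarrow> fo_holds s' \<phi>"
  using assms
proof (induction \<phi> arbitrary: s s')
  case (FEq x y)
  then show ?case by (auto simp: order.eq_iff not_less[symmetric])
next
  case (FAnd \<phi>1 \<phi>2)
  have "fo_holds s \<phi>1 = fo_holds s' \<phi>1" "fo_holds s \<phi>2 = fo_holds s' \<phi>2"
    using FAnd.prems by (auto intro!: FAnd.IH)
  then show ?case by simp
next
  case (FEx x \<phi>)
  have step: "fo_holds s' (FEx x \<phi>)"
    if equiv: "\<forall>i\<in>fo_free \<phi> - {x}. \<forall>j\<in>fo_free \<phi> - {x}. s i < s j \<longleftrightarrow> s' i < s' j"
      and holds: "fo_holds s (FEx x \<phi>)" for s s'
  proof -
    obtain a where a: "fo_holds (s(x := a)) \<phi>" using holds by auto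
    obtain a' where "\<forall>i\<in>insert x (fo_free \<phi> - {x}). \<forall>j\<in>insert x (fo_free \<phi> - {x}).
        (s(x := a)) i < (s(x := a)) j \<longleftrightarrow> (s'(x := a')) i < (s'(x := a')) j"
      using order_equiv_extend[OF _ _ equiv] finite_fo_free by blast
    then have "fo_holds (s'(x := a')) \<phi>"
      using FEx.IH[of "s(x := a)" "s'(x := a')"] a by blast
    then show ?thesis by auto
  qed
  show ?case using step[of s s'] step[of s' s] FEx.prems by auto
qed auto

lemma fo_definable_strict_mono_map:
  assumes "fo_definable n R" "x \<in> R" "strict_mono_on (set x) g"
  shows "map g x \<in> R"
proof -
  obtain \<phi> where \<phi>: "fo_free \<phi> \<subseteq> {..<n}" "R = {xs. length xs = n \<and> fo_holds (\<lambda>i. xs ! i) \<phi>}"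
    using assms(1) unfolding fo_definable_def by blast
  have "\<forall>i\<in>fo_free \<phi>. \<forall>j\<in>fo_free \<phi>. x ! i < x ! j \<longleftrightarrow> map g x ! i < map g x ! j"
  proof (intro ballI)
    fix i j assume "i \<in> fo_free \<phi>" "j \<in> fo_free \<phi>"
    then have "i < length x" "j < length x" using \<phi> assms(2) by auto
    then show "x ! i < x ! j \<longleftrightarrow> map g x ! i < map g x ! j"
      using strict_mono_on_less[OF assms(3)] by simp
  qed
  then show ?thesis
    using fo_holds_order_invariant[of \<phi> "nth x" "nth (map g x)"] \<phi> assms(2) by auto
qed

lemma strict_mono_on_affine:
  fixes a b :: "'a::linordered_field"
  shows "0 < a \<Longrightarrow> strict_mono_on A (\<lambda>t. a * t + b)"
  by (intro strict_mono_onI) simp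

lemma ex_strict_mono_on_onto:
  fixes A :: "'a::linorder set" and B :: "'b::linorder set"
  assumes "finite A" "finite B" "card A = card B"
  obtains h where "strict_mono_on A h" "h ` A = B"
proof -
  define rank where "rank v = card {w \<in> A. w < v}" for v
  define h where "h v = sorted_list_of_set B ! rank v" for v
  have rank_less: "rank v < card A" if "v \<in> A" for v
    unfolding rank_def using that assms(1) by (intro psubset_card_mono) auto
  have rank_mono: "rank v < rank v'" if "v \<in> A" "v' \<in> A" "v < v'" for v v'
    unfolding rank_def using that assms(1) by (intro psubset_card_mono) auto
  have mono: "strict_mono_on A h"
  proof (rule strict_mono_onI)
    fix v v' assume "v \<in> A" "v' \<in> A" "v < v'"
    then show "h v < h v'"
      unfolding h_def using rank_mono rank_less assms
      by (intro sorted_wrt_nth_less[OF strict_sorted_list_of_set]) auto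
  qed
  have "h v \<in> B" if "v \<in> A" for v
  proof -
    have "rank v < length (sorted_list_of_set B)" using rank_less that assms by simp
    then have "h v \<in> set (sorted_list_of_set B)" unfolding h_def by (rule nth_mem)
    then show ?thesis using assms(2) by simp
  qed
  then have "h ` A \<subseteq> B" by blast
  moreover have "card (h ` A) = card B"
    using card_image[OF strict_mono_on_imp_inj_on[OF mono]] assms(3) by simp
  ultimately have "h ` A = B" using assms(2) by (intro card_subset_eq)
  with mono show thesis by (rule that)
qed

lemma card_le_2_subset_pair:
  assumes "finite A" "card A \<le> 2"
  obtains c d where "A \<subseteq> {c, d}"
proof -
  consider "card A = 0" | "card A = 1" | "card A = 2" using assms(2) by linarith
  then show thesis
  proof cases
    case 1
    then show thesis using that assms(1) by simp
  next
    case 2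
    then show thesis using that by (metis card_1_singletonE insert_subsetI subset_insertI)
  next
    case 3
    then show thesis using that by (metis card_2_iff order.refl)
  qed
qed

lemma map_nth_map: "set vs \<subseteq> {..<length x} \<Longrightarrow> map ((!) (map g x)) vs = map (g \<circ> (!) x) vs"
  by auto

lemma set_map_nth_subset: "set vs \<subseteq> {..<length x} \<Longrightarrow> set (map ((!) x) vs) \<subseteq> set x"
  by auto

lemma ex_indices_map_nth:
  assumes "set ys \<subseteq> set z"
  shows "\<exists>\<tau>. length \<tau> = length ys \<and> set \<tau> \<subseteq> {..<length z} \<and> map ((!) z) \<tau> = ys"
  using assms
proof (induction ys)
  case (Cons y ys)
  obtain \<tau> where "length \<tau> = length ys" "set \<tau> \<subseteq> {..<length z}" "map ((!) z) \<tau> = ys"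
    using Cons by auto
  moreover obtain i where "i < length z" "z ! i = y"
    using Cons.prems by (auto simp: in_set_conv_nth)
  ultimately show ?case by (intro exI[of _ "i # \<tau>"]) auto
qed simp

lemma ex_inj_on_map_eq:
  assumes "distinct z" "distinct w" "length z = length w"
  shows "\<exists>\<psi>. inj_on \<psi> (set z) \<and> map \<psi> z = w"
  using assms(3,1,2)
proof (induction z w rule: list_induct2)
  case (Cons a z b w)
  then obtain \<psi> where "inj_on \<psi> (set z)" "map \<psi> z = w" by auto
  with Cons.prems have "inj_on (\<psi>(a := b)) (set (a # z)) \<and> map (\<psi>(a := b)) (a # z) = b # w"
    by (auto simp: inj_on_def)
  then show ?case by (intro exI[where x = "\<psi>(a := b)"])
qed simp

lemma not_distinct_iff_card_less: "\<not> distinct xs \<longleftrightarrow> card (set xs) < length xs"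
  using card_length[of xs] distinct_card[of xs] card_distinct[of xs] by linarith

lemma length_3_conv: "length z = 3 \<longleftrightarrow> (\<exists>p q r. z = [p, q, r])"
  by (auto simp: length_Suc_conv numeral_3_eq_3)

lemma EqOr_eq: "EqOr n = {z. length z = n \<and> \<not> distinct z}"
  unfolding EqOr_def distinct_conv_nth by auto

definition order_peak_closed :: "nat \<Rightarrow> rat list set \<Rightarrow> bool" where
  "order_peak_closed n T \<longleftrightarrow> (\<forall>x\<in>T. length x = n \<and> map peak x \<in> T \<and>
      (\<forall>g. strict_mono_on (set x) g \<longrightarrow> map g x \<in> T))"

definition inj_map_closed :: "'a list set \<Rightarrow> bool" where
  "inj_map_closed T \<longleftrightarrow> (\<forall>x\<in>T. \<forall>g. inj_on g (set x) \<longrightarrow> map g x \<in> T)"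

definition conj_definable :: "nat \<Rightarrow> 'a list set \<Rightarrow> nat \<Rightarrow> 'a list set \<Rightarrow> bool" where
  "conj_definable k R n T \<longleftrightarrow> (\<exists>V. finite V \<and> (\<forall>vs\<in>V. length vs = k \<and> set vs \<subseteq> {..<n}) \<and>
      T = {xs. length xs = n \<and> (\<forall>vs\<in>V. map ((!) xs) vs \<in> R)})"

lemma conj_definable_self: "\<forall>t\<in>R. length t = k \<Longrightarrow> conj_definable k R k R"
  unfolding conj_definable_def by (intro exI[of _ "{[0..<k]}"]) (auto simp: map_nth)

lemma conj_definable_substitute:
  assumes "conj_definable k R n T" "finite W" "\<forall>\<tau>\<in>W. length \<tau> = n \<and> set \<tau> \<subseteq> {..<m}"
  shows "conj_definable k R m {y. length y = m \<and> (\<forall>\<tau>\<in>W. map ((!) y) \<tau> \<in> T)}"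
proof -
  obtain V where V: "finite V" "\<forall>vs\<in>V. length vs = k \<and> set vs \<subseteq> {..<n}"
    and T: "T = {xs. length xs = n \<and> (\<forall>vs\<in>V. map ((!) xs) vs \<in> R)}"
    using assms(1) unfolding conj_definable_def by blast
  let ?V = "(\<lambda>(\<tau>, vs). map ((!) \<tau>) vs) ` (W \<times> V)"
  have "map ((!) y) \<tau> \<in> T \<longleftrightarrow> (\<forall>vs\<in>V. map ((!) y) (map ((!) \<tau>) vs) \<in> R)"
    if "\<tau> \<in> W" for y \<tau>
    using that V(2) assms(3) unfolding T by (auto simp: map_nth_map)
  then have "{y. length y = m \<and> (\<forall>\<tau>\<in>W. map ((!) y) \<tau> \<in> T)}
      = {y. length y = m \<and> (\<forall>vs\<in>?V. map ((!) y) vs \<in> R)}"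
    by (auto simp del: map_map)
  moreover have "finite ?V" using V(1) assms(2) by simp
  moreover have "\<forall>vs\<in>?V. length vs = k \<and> set vs \<subseteq> {..<m}"
  proof
    fix vs' assume "vs' \<in> ?V"
    then obtain \<tau> vs where \<tau>: "\<tau> \<in> W" and vs: "vs \<in> V" "vs' = map ((!) \<tau>) vs" by auto
    then have "set vs \<subseteq> {..<length \<tau>}" using V(2) assms(3) by auto
    then have "set vs' \<subseteq> set \<tau>" using vs(2) set_map_nth_subset by blast
    also have "set \<tau> \<subseteq> {..<m}" using \<tau> assms(3) by blast
    finally show "length vs' = k \<and> set vs' \<subseteq> {..<m}" using vs V(2) by simp
  qed
  ultimately show ?thesis unfolding conj_definable_def by (intro exI[of _ ?V]) simp
qed

lemma pp_defines_conj_definable: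
  assumes "i < length \<Gamma>" "\<Gamma> ! i = (k, R)" "conj_definable k R n T"
  shows "pp_defines \<Gamma> n T"
proof -
  obtain V where V: "finite V" "\<forall>vs\<in>V. length vs = k \<and> set vs \<subseteq> {..<n}"
    and T: "T = {xs. length xs = n \<and> (\<forall>vs\<in>V. map ((!) xs) vs \<in> R)}"
    using assms(3) unfolding conj_definable_def by blast
  obtain vl where vl: "set vl = V" using finite_list[OF V(1)] by blast
  let ?atoms = "map (Pair i) vl"
  have atoms: "\<forall>(j, vs)\<in>set ?atoms. j < length \<Gamma> \<and> length vs = fst (\<Gamma> ! j) \<and> (\<forall>v\<in>set vs. v < n)"
    using assms(1,2) V(2) vl by auto
  have T_eq: "T = {xs. length xs = n \<and> (\<exists>ys. length ys = n - n \<and>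
      (\<forall>(j, vs)\<in>set ?atoms. map (\<lambda>v. (xs @ ys) ! v) vs \<in> snd (\<Gamma> ! j)) \<and>
      (\<forall>(u, v)\<in>set []. (xs @ ys) ! u = (xs @ ys) ! v))}"
    unfolding T using assms(2) vl by auto
  show ?thesis unfolding pp_defines_def
    by (intro exI[of _ n] exI[of _ ?atoms] exI[of _ "[]"] conjI order.refl atoms T_eq) simp
qed

lemma order_peak_closed_relation:
  assumes "temporal_language \<Gamma>" "preserves peak \<Gamma>" "(k, R) \<in> set \<Gamma>"
  shows "order_peak_closed k R"
proof -
  have "\<forall>t\<in>R. length t = k" "fo_definable k R"
    using assms(1,3) unfolding temporal_language_def by auto
  moreover have "\<forall>t\<in>R. map peak t \<in> R"
    using assms(2,3) unfolding preserves_def by auto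
  ultimately show ?thesis
    unfolding order_peak_closed_def using fo_definable_strict_mono_map by blast
qed

lemma order_peak_closed_conj_definable:
  assumes R: "order_peak_closed k R" and "conj_definable k R n T"
  shows "order_peak_closed n T"
proof -
  obtain V where V: "\<forall>vs\<in>V. length vs = k \<and> set vs \<subseteq> {..<n}"
    and T: "T = {xs. length xs = n \<and> (\<forall>vs\<in>V. map ((!) xs) vs \<in> R)}"
    using assms(2) unfolding conj_definable_def by blast
  show ?thesis unfolding order_peak_closed_def
  proof (intro ballI conjI allI impI)
    fix x assume "x \<in> T"
    then have len: "length x = n" and xR: "\<forall>vs\<in>V. map ((!) x) vs \<in> R" unfolding T by auto
    have bound: "set vs \<subseteq> {..<length x}" if "vs \<in> V" for vs using V that len by auto
    show "length x = n" by (rule len)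
    have "map peak (map ((!) x) vs) \<in> R" if "vs \<in> V" for vs
      using R xR that unfolding order_peak_closed_def by blast
    then show "map peak x \<in> T"
      unfolding T using bound len by (simp add: map_nth_map)
    fix g :: "rat \<Rightarrow> rat" assume "strict_mono_on (set x) g"
    then have "strict_mono_on (set (map ((!) x) vs)) g" if "vs \<in> V" for vs
      using monotone_on_subset set_map_nth_subset[OF bound[OF that]] by blast
    then have "map g (map ((!) x) vs) \<in> R" if "vs \<in> V" for vs
      using R xR that unfolding order_peak_closed_def by blast
    then show "map g x \<in> T"
      unfolding T using bound len by (simp add: map_nth_map)
  qed
qed

lemma order_peak_closed_indicator:
  assumes T: "order_peak_closed n T" and x: "x \<in> T"
  shows "map (\<lambda>z. if z = c then 1 else -1) x \<in> T" (is "?ind \<in> T")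
    and "map (\<lambda>z. if z = c then -1 else 1) x \<in> T"
proof -
  have shift: "map (\<lambda>z. z + d) y \<in> T" if "y \<in> T" for y d
    using T that strict_mono_on_affine[of 1 _ d] unfolding order_peak_closed_def by simp
  have peak: "map peak y \<in> T" if "y \<in> T" for y
    using T that unfolding order_peak_closed_def by blast
  have e: "map peak (map (\<lambda>z. z + - c) x) = ?ind"
    by (induction x) (auto simp: peak_def)
  from peak[OF shift[OF x, where d = "- c"]] show ind: "?ind \<in> T" unfolding e .
  have e': "map peak (map (\<lambda>z. z + 1) ?ind) = map (\<lambda>z. if z = c then -1 else 1) x"
    by (induction x) (auto simp: peak_def)
  from peak[OF shift[OF ind, where d = 1]] show "map (\<lambda>z. if z = c then -1 else 1) x \<in> T"
    unfolding e' .
qed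

lemma order_peak_closed_map_if:
  assumes T: "order_peak_closed n T" and x: "x \<in> T"
  shows "map (\<lambda>z. if z = c then \<alpha> else \<beta>) x \<in> T"
proof -
  have affine: "map (\<lambda>t. a * t + b) y \<in> T" if "y \<in> T" "0 < a" for y a b
    using T that strict_mono_on_affine unfolding order_peak_closed_def by blast
  have neq: "map (\<lambda>z. if z = c then \<alpha> else \<beta>) x \<in> T" if "\<alpha> \<noteq> \<beta>" for c \<alpha> \<beta>
  proof (cases "\<beta> < \<alpha>")
    case True
    have e: "map (\<lambda>t. (\<alpha> - \<beta>) / 2 * t + (\<alpha> + \<beta>) / 2) (map (\<lambda>z. if z = c then 1 else -1) x)
        = map (\<lambda>z. if z = c then \<alpha> else \<beta>) x"
      by (induction x) (auto simp: field_simps)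
    have "map (\<lambda>t. (\<alpha> - \<beta>) / 2 * t + (\<alpha> + \<beta>) / 2) (map (\<lambda>z. if z = c then 1 else -1) x) \<in> T"
      by (rule affine[OF order_peak_closed_indicator(1)[OF T x]]) (use True in simp)
    then show ?thesis unfolding e .
  next
    case False
    with that have "\<alpha> < \<beta>" by simp
    have e: "map (\<lambda>t. (\<beta> - \<alpha>) / 2 * t + (\<alpha> + \<beta>) / 2) (map (\<lambda>z. if z = c then -1 else 1) x)
        = map (\<lambda>z. if z = c then \<alpha> else \<beta>) x"
      by (induction x) (auto simp: field_simps)
    have "map (\<lambda>t. (\<beta> - \<alpha>) / 2 * t + (\<alpha> + \<beta>) / 2) (map (\<lambda>z. if z = c then -1 else 1) x) \<in> T"
      by (rule affine[OF order_peak_closed_indicator(2)[OF T x]]) (use \<open>\<alpha> < \<beta>\<close> in simp)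
    then show ?thesis unfolding e .
  qed
  show ?thesis
  proof (cases "\<alpha> = \<beta>")
    case True
    obtain c' :: rat where "c' \<notin> set x"
      using ex_new_if_finite[OF infinite_UNIV_char_0] by blast
    then have e: "map (\<lambda>z. if z = c' then \<alpha> + 1 else \<alpha>) x = map (\<lambda>z. if z = c then \<alpha> else \<beta>) x"
      using True by (auto intro: map_cong)
    from neq[of "\<alpha> + 1" \<alpha> c'] show ?thesis unfolding e by simp
  qed (rule neq)
qed

lemma order_peak_closed_two_values:
  assumes T: "order_peak_closed n T" and x: "x \<in> T" "card (set x) \<le> 2"
  shows "map g x \<in> T"
proof -
  obtain c d where cd: "set x \<subseteq> {c, d}" using card_le_2_subset_pair[OF _ x(2)] by blast
  then have eq: "map g x = map (\<lambda>z. if z = c then g c else g d) x" by (auto intro: map_cong)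
  show ?thesis unfolding eq by (rule order_peak_closed_map_if[OF T x(1)])
qed

lemma order_peak_closed_point:
  assumes T: "order_peak_closed n T" and x: "x \<in> T" "distinct x" and "p < n"
  shows "(replicate n \<beta>)[p := \<alpha>] \<in> T"
proof -
  have "length x = n" using T x(1) unfolding order_peak_closed_def by blast
  then have eq: "(replicate n \<beta>)[p := \<alpha>] = map (\<lambda>z. if z = x ! p then \<alpha> else \<beta>) x"
    using x(2) \<open>p < n\<close> by (intro nth_equalityI) (auto simp: nth_list_update nth_eq_iff_index_eq)
  show ?thesis unfolding eq by (rule order_peak_closed_map_if[OF T x(1)])
qed

lemma conj_definable_map_mem_via_remdups:
  assumes T: "conj_definable k R n T" and x: "x \<in> T" "length x = n" and g: "inj_on g (set x)"
    and fewer: "\<forall>T'. conj_definable k R (card (set x)) T' \<longrightarrow> inj_map_closed T'"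
  shows "map g x \<in> T"
proof -
  define w where "w = remdups x"
  have w: "set w = set x" "length w = card (set x)"
    unfolding w_def by (simp_all add: length_remdups_card_conv)
  obtain \<tau> where \<tau>: "length \<tau> = n" "set \<tau> \<subseteq> {..<card (set x)}" "map ((!) w) \<tau> = x"
    using ex_indices_map_nth[of x w] w x(2) by auto
  let ?T' = "{z. length z = card (set x) \<and> map ((!) z) \<tau> \<in> T}"
  have "conj_definable k R (card (set x)) ?T'"
    using conj_definable_substitute[OF T, of "{\<tau>}"] \<tau> by simp
  then have "inj_map_closed ?T'" using fewer by blast
  moreover have "w \<in> ?T'" using \<tau> w x(1) by simp
  ultimately have "map ((!) (map g w)) \<tau> \<in> T" using g w(1) unfolding inj_map_closed_def by auto
  moreover have "map ((!) (map g w)) \<tau> = map g x"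
    by (subst \<tau>(3)[symmetric]) (use \<tau>(2) w(2) in \<open>simp add: map_nth_map\<close>)
  ultimately show ?thesis by simp
qed

lemma conj_definable_EqOr_if_nondistinct_subset:
  assumes T: "order_peak_closed n T" "conj_definable k R n T"
    and nondistinct: "\<forall>z. length z = n \<longrightarrow> \<not> distinct z \<longrightarrow> z \<in> T"
    and y: "length y = n" "distinct y" "y \<notin> T"
  shows "conj_definable k R n (EqOr n)"
proof -
  define W where "W = {\<tau>. set \<tau> \<subseteq> {..<n} \<and> length \<tau> = n}"
  have W: "finite W" "\<forall>\<tau>\<in>W. length \<tau> = n \<and> set \<tau> \<subseteq> {..<n}"
    unfolding W_def using finite_lists_length_eq[of "{..<n}" n] by auto
  have "\<not> distinct z" if z: "length z = n" "\<forall>\<tau>\<in>W. map ((!) z) \<tau> \<in> T" for z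
  proof
    assume "distinct z"
    then have "card (set z) = card (set y)" using y z(1) by (simp add: distinct_card)
    then obtain h where h: "strict_mono_on (set z) h" "h ` set z = set y"
      using ex_strict_mono_on_onto[OF finite_set finite_set] by blast
    obtain \<tau> where \<tau>: "length \<tau> = n" "set \<tau> \<subseteq> {..<n}" "map ((!) (map h z)) \<tau> = y"
      using ex_indices_map_nth[of y "map h z"] h(2) y(1) z(1) by auto
    have "map ((!) z) \<tau> \<in> T" using z(2) \<tau> unfolding W_def by blast
    moreover have "strict_mono_on (set (map ((!) z) \<tau>)) h"
      using h(1) monotone_on_subset set_map_nth_subset \<tau>(2) z(1) by blast
    ultimately have "map h (map ((!) z) \<tau>) \<in> T" using T(1) unfolding order_peak_closed_def by blast
    moreover have "map h (map ((!) z) \<tau>) = y" using \<tau> z(1) by (simp add: map_nth_map)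
    ultimately show False using y(3) by simp
  qed
  moreover have "map ((!) z) \<tau> \<in> T" if z: "length z = n" "\<not> distinct z" and "\<tau> \<in> W" for z \<tau>
  proof -
    have len: "length (map ((!) z) \<tau>) = n" using \<open>\<tau> \<in> W\<close> W(2) by simp
    have "set (map ((!) z) \<tau>) \<subseteq> set z" using \<open>\<tau> \<in> W\<close> z(1) W(2) set_map_nth_subset by blast
    then have "card (set (map ((!) z) \<tau>)) \<le> card (set z)" by (rule card_mono[OF finite_set])
    also have "\<dots> < n" using z not_distinct_iff_card_less by metis
    finally have "\<not> distinct (map ((!) z) \<tau>)" using len not_distinct_iff_card_less by metis
    then show ?thesis using nondistinct len by blast
  qed
  ultimately have "{z. length z = n \<and> (\<forall>\<tau>\<in>W. map ((!) z) \<tau> \<in> T)} = EqOr n"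
    unfolding EqOr_eq by blast
  then show ?thesis using conj_definable_substitute[OF T(2) W] by simp
qed

lemma conj_definable_EqOr_of_min_gap:
  assumes T: "conj_definable k R n T"
    and nondistinct_closed: "\<forall>z\<in>T. \<not> distinct z \<longrightarrow> (\<forall>g. inj_on g (set z) \<longrightarrow> map g z \<in> T)"
    and u: "length u = n" "\<not> distinct u" "u \<notin> T"
    and min: "\<forall>v. length v = n \<and> \<not> distinct v \<and> v \<notin> T \<longrightarrow> card (set u) \<le> card (set v)"
  shows "conj_definable k R (card (set u)) (EqOr (card (set u)))"
proof -
  define m where "m = card (set u)"
  define w where "w = remdups u"
  have w: "distinct w" "set w = set u" "length w = m"
    unfolding w_def m_def by (simp_all add: length_remdups_card_conv)
  have "m < n" using u not_distinct_iff_card_less unfolding m_def by metis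
  obtain \<tau> where \<tau>: "length \<tau> = n" "set \<tau> \<subseteq> {..<m}" "map ((!) w) \<tau> = u"
    using ex_indices_map_nth[of u w] w u(1) by auto
  have fewer_values: "card (set (map ((!) z) \<tau>)) \<le> card (set z)" if "length z = m" for z
    using that \<tau>(2) set_map_nth_subset by (metis card_mono finite_set)
  have nondistinct: "\<not> distinct (map ((!) z) \<tau>)" if "length z = m" for z
    using fewer_values[OF that] card_length[of z] that \<open>m < n\<close> \<tau>(1) not_distinct_iff_card_less
    by (metis length_map order.trans le_less_trans)
  have "\<not> distinct z" if z: "length z = m" "map ((!) z) \<tau> \<in> T" for z
  proof
    assume "distinct z"
    then obtain \<psi> where \<psi>: "inj_on \<psi> (set z)" "map \<psi> z = w"
      using ex_inj_on_map_eq w z(1) by metis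
    have "inj_on \<psi> (set (map ((!) z) \<tau>))"
      using inj_on_subset[OF \<psi>(1) set_map_nth_subset] \<tau>(2) z(1) by blast
    then have "map \<psi> (map ((!) z) \<tau>) \<in> T" using nondistinct_closed z nondistinct by blast
    moreover have "map \<psi> (map ((!) z) \<tau>) = u"
      by (subst \<tau>(3)[symmetric], subst \<psi>(2)[symmetric]) (use \<tau>(2) z(1) in \<open>simp add: map_nth_map\<close>)
    ultimately show False using u(3) by simp
  qed
  moreover have "map ((!) z) \<tau> \<in> T" if z: "length z = m" "\<not> distinct z" for z
  proof (rule ccontr)
    assume "map ((!) z) \<tau> \<notin> T"
    then have "m \<le> card (set (map ((!) z) \<tau>))"
      using min nondistinct[OF z(1)] \<tau>(1) length_map unfolding m_def by metis
    moreover have "card (set z) < m" using z not_distinct_iff_card_less by metis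
    ultimately show False using fewer_values[OF z(1)] by simp
  qed
  ultimately have "{z. length z = m \<and> (\<forall>\<tau>'\<in>{\<tau>}. map ((!) z) \<tau>' \<in> T)} = EqOr m"
    unfolding EqOr_eq by auto
  then show ?thesis
    using conj_definable_substitute[OF T, of "{\<tau>}" m] \<tau> unfolding m_def by simp
qed

lemma conj_definable_EqOr_if_two_valued_subset:
  assumes T: "order_peak_closed n T" "conj_definable k R n T" and x: "x \<in> T"
    and two_valued: "\<forall>z. length z = n \<longrightarrow> card (set z) = 2 \<longrightarrow> z \<in> T"
    and nondistinct_closed: "\<forall>z\<in>T. \<not> distinct z \<longrightarrow> (\<forall>g. inj_on g (set z) \<longrightarrow> map g z \<in> T)"
    and gap: "\<exists>u. length u = n \<and> \<not> distinct u \<and> u \<notin> T"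
  shows "\<exists>m\<ge>3. conj_definable k R m (EqOr m)"
proof -
  obtain u where u: "length u = n" "\<not> distinct u" "u \<notin> T"
    and min: "\<forall>v. length v = n \<and> \<not> distinct v \<and> v \<notin> T \<longrightarrow> card (set u) \<le> card (set v)"
    using ex_has_least_nat[of "\<lambda>u. length u = n \<and> \<not> distinct u \<and> u \<notin> T" _ "\<lambda>u. card (set u)"] gap
    by blast
  have "card (set u) \<noteq> 0" using u(2) by auto
  moreover have "card (set u) \<noteq> 1"
  proof
    assume "card (set u) = 1"
    then obtain c where "set u = {c}" by (rule card_1_singletonE)
    moreover have "length x = n" using T(1) x unfolding order_peak_closed_def by blast
    ultimately have "u = map (\<lambda>z. if z = c then c else c) x"
      using u(1) replicate_length_same[of u c] by (simp add: map_replicate_const)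
    then show False using order_peak_closed_map_if[OF T(1) x, of c c c] u(3) by simp
  qed
  moreover have "card (set u) \<noteq> 2" using two_valued u by blast
  ultimately have "3 \<le> card (set u)" by linarith
  then show ?thesis using conj_definable_EqOr_of_min_gap[OF T(2) nondistinct_closed u min] by blast
qed

lemma ex_max_two_valued_gap:
  assumes "length u0 = n" "card (set u0) = 2" "u0 \<notin> T"
  obtains u a b where "length u = n" "set u = {a, b}" "a \<noteq> b" "u \<notin> T"
    "\<forall>v p q. length v = n \<and> set v = {p, q} \<and> p \<noteq> q \<and> v \<notin> T \<longrightarrow>
      card {i. i < n \<and> v ! i = p} \<le> card {i. i < n \<and> u ! i = a}"
proof -
  let ?P = "\<lambda>(v, p). length v = n \<and> (\<exists>q. set v = {p, q} \<and> p \<noteq> q) \<and> v \<notin> T"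
  let ?count = "\<lambda>(v, p). card {i. i < n \<and> v ! i = p}"
  obtain a0 b0 where "set u0 = {a0, b0}" "a0 \<noteq> b0" using assms(2) unfolding card_2_iff by blast
  then have "?P (u0, a0)" using assms by auto
  moreover have "?count y < Suc n" for y
  proof -
    have "card {i. i < n \<and> fst y ! i = snd y} \<le> card {..<n}" by (rule card_mono) auto
    then show ?thesis by (simp add: case_prod_beta)
  qed
  ultimately obtain y where y: "?P y" and max: "\<forall>y'. ?P y' \<longrightarrow> ?count y' \<le> ?count y"
    using ex_has_greatest_nat[of ?P "(u0, a0)" ?count "Suc n"] by blast
  obtain u a where ua: "y = (u, a)" by (cases y)
  from y obtain b where "length u = n" "set u = {a, b}" "a \<noteq> b" "u \<notin> T" unfolding ua by auto
  moreover have "\<forall>v p q. length v = n \<and> set v = {p, q} \<and> p \<noteq> q \<and> v \<notin> T \<longrightarrow>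
      card {i. i < n \<and> v ! i = p} \<le> card {i. i < n \<and> u ! i = a}"
  proof (intro allI impI)
    fix v p q assume "length v = n \<and> set v = {p, q} \<and> p \<noteq> q \<and> v \<notin> T"
    then have "?P (v, p)" by auto
    then show "card {i. i < n \<and> v ! i = p} \<le> card {i. i < n \<and> u ! i = a}"
      using max unfolding ua by fastforce
  qed
  ultimately show thesis by (rule that)
qed

text \<open>Put \<open>p\<close> on the \<open>a\<close>-entries of \<open>u\<close>, \<open>r\<close> at \<open>c\<close> and \<open>q\<close> on the other
  \<open>b\<close>-entries; the maximality of \<open>u\<close> excludes \<open>p = r \<noteq> q\<close>.\<close>
lemma two_valued_gap_pattern:
  assumes T: "order_peak_closed n T" and x: "x \<in> T" "distinct x"
    and u: "length u = n" "set u = {a, b}" "a \<noteq> b" "u \<notin> T"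
    and max: "\<forall>v p q. length v = n \<and> set v = {p, q} \<and> p \<noteq> q \<and> v \<notin> T \<longrightarrow>
      card {i. i < n \<and> v ! i = p} \<le> card {i. i < n \<and> u ! i = a}"
    and c: "c < n" "u ! c = b" and c': "c' < n" "c' \<noteq> c" "u ! c' = b"
    and v: "length v = n" "\<forall>i<n. v ! i = (if u ! i = a then p else if i = c then r else q)"
  shows "v \<in> T \<longleftrightarrow> p = q \<or> p = r"
proof -
  have u_vals: "u ! i = a \<or> u ! i = b" if "i < n" for i
    using u(1,2) nth_mem[of i u] that by auto
  consider "p = q" | "p \<noteq> q" "p = r" | "p \<noteq> q" "p \<noteq> r" by blast
  then show ?thesis
  proof cases
    case 1
    have "v = (replicate n p)[c := r]"
      using v c u(3) 1 by (intro nth_equalityI) (auto simp: nth_list_update)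
    then show ?thesis using order_peak_closed_point[OF T x c(1)] 1 by simp
  next
    case 2
    have "v \<in> T"
    proof (rule ccontr)
      assume "v \<notin> T"
      have vals: "v ! i \<in> {p, q}" if "i < n" for i using v(2) that 2 by simp
      have "set v \<subseteq> {p, q}"
      proof
        fix z assume "z \<in> set v"
        then obtain i where "i < n" "v ! i = z" using v(1) by (auto simp: in_set_conv_nth)
        then show "z \<in> {p, q}" using vals by blast
      qed
      moreover have "v ! c = p" "v ! c' = q" using v(2) c c' u(3) 2 by simp_all
      then have "{p, q} \<subseteq> set v" using c(1) c'(1) v(1) by (metis empty_subsetI insert_subset nth_mem)
      ultimately have "card {i. i < n \<and> v ! i = p} \<le> card {i. i < n \<and> u ! i = a}"
        using max v(1) 2 \<open>v \<notin> T\<close> by blast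
      moreover have "v ! i = p \<longleftrightarrow> u ! i = a \<or> i = c" if "i < n" for i
        using v(2) that 2 by auto
      then have "{i. i < n \<and> v ! i = p} = insert c {i. i < n \<and> u ! i = a}"
        using c(1) by auto
      moreover have "c \<notin> {i. i < n \<and> u ! i = a}" using c u(3) by auto
      ultimately show False by simp
    qed
    then show ?thesis using 2 by simp
  next
    case 3
    have "u = map (\<lambda>z. if z = p then a else b) v"
      using u(1) v 3 u_vals by (intro nth_equalityI) auto
    then have "v \<notin> T" using order_peak_closed_map_if[OF T] u(4) by metis
    then show ?thesis using 3 by simp
  qed
qed

lemma conj_definable_EqXor_if_two_valued_gap:
  assumes T: "order_peak_closed n T" "conj_definable k R n T" and x: "x \<in> T" "distinct x"
    and gap: "\<exists>u. length u = n \<and> card (set u) = 2 \<and> u \<notin> T"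
  shows "conj_definable k R 3 EqXor"
proof -
  obtain u a b where u: "length u = n" "set u = {a, b}" "a \<noteq> b" "u \<notin> T"
    and max: "\<forall>v p q. length v = n \<and> set v = {p, q} \<and> p \<noteq> q \<and> v \<notin> T \<longrightarrow>
      card {i. i < n \<and> v ! i = p} \<le> card {i. i < n \<and> u ! i = a}"
    using gap ex_max_two_valued_gap by blast
  have u_vals: "u ! i = a \<or> u ! i = b" if "i < n" for i
    using u(1,2) nth_mem[of i u] that by auto
  have "b \<in> set u" using u(2) by simp
  then obtain c where c: "c < n" "u ! c = b" using u(1) by (auto simp: in_set_conv_nth)
  have "\<exists>c'. c' < n \<and> c' \<noteq> c \<and> u ! c' = b"
  proof (rule ccontr)
    assume "\<nexists>c'. c' < n \<and> c' \<noteq> c \<and> u ! c' = b"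
    then have "u = (replicate n a)[c := b]"
      using u(1) c u_vals by (intro nth_equalityI) (auto simp: nth_list_update)
    then show False using order_peak_closed_point[OF T(1) x c(1)] u(4) by simp
  qed
  then obtain c' where c': "c' < n" "c' \<noteq> c" "u ! c' = b" by blast
  define \<tau> where "\<tau> = map (\<lambda>i. if u ! i = a then 0 else if i = c then 2 else 1::nat) [0..<n]"
  have \<tau>: "length \<tau> = n" "set \<tau> \<subseteq> {..<3}" unfolding \<tau>_def by auto
  have pattern: "map ((!) [p, q, r]) \<tau> \<in> T \<longleftrightarrow> p = q \<or> p = r" for p q r
    by (rule two_valued_gap_pattern[OF T(1) x u max c c']) (auto simp: \<tau>_def)
  have "z \<in> EqXor \<longleftrightarrow> length z = 3 \<and> map ((!) z) \<tau> \<in> T" for z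
  proof (cases "length z = 3")
    case True
    then obtain p q r where "z = [p, q, r]" unfolding length_3_conv by blast
    then show ?thesis using pattern unfolding EqXor_def by auto
  qed (auto simp: EqXor_def)
  then have "{z. length z = 3 \<and> (\<forall>\<tau>'\<in>{\<tau>}. map ((!) z) \<tau>' \<in> T)} = EqXor" by auto
  then show ?thesis using conj_definable_substitute[OF T(2), of "{\<tau>}" 3] \<tau> by simp
qed

lemma conj_definable_EqXor_or_EqOr_if_distinct_gap:
  assumes T: "order_peak_closed n T" "conj_definable k R n T"
    and nondistinct_closed: "\<forall>z\<in>T. \<not> distinct z \<longrightarrow> (\<forall>g. inj_on g (set z) \<longrightarrow> map g z \<in> T)"
    and x: "x \<in> T" "distinct x" and y: "length y = n" "distinct y" "y \<notin> T"
  shows "conj_definable k R 3 EqXor \<or> (\<exists>m\<ge>3. conj_definable k R m (EqOr m))"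
proof -
  have "length x = n" using T(1) x(1) unfolding order_peak_closed_def by blast
  have "3 \<le> n"
  proof (rule ccontr)
    assume "\<not> 3 \<le> n"
    then have "card (set x) \<le> 2" using card_length[of x] \<open>length x = n\<close> by linarith
    moreover obtain \<psi> where "map \<psi> x = y"
      using ex_inj_on_map_eq[OF x(2) y(2)] \<open>length x = n\<close> y(1) by auto
    ultimately show False using order_peak_closed_two_values[OF T(1) x(1)] y(3) by blast
  qed
  consider (all_nondistinct) "\<forall>z. length z = n \<longrightarrow> \<not> distinct z \<longrightarrow> z \<in> T"
    | (two_valued_gap) "\<exists>u. length u = n \<and> card (set u) = 2 \<and> u \<notin> T"
    | (nondistinct_gap) "\<forall>z. length z = n \<longrightarrow> card (set z) = 2 \<longrightarrow> z \<in> T"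
        "\<exists>u. length u = n \<and> \<not> distinct u \<and> u \<notin> T"
    by blast
  then show ?thesis
  proof cases
    case all_nondistinct
    then show ?thesis
      using conj_definable_EqOr_if_nondistinct_subset[OF T all_nondistinct y] \<open>3 \<le> n\<close> by blast
  next
    case two_valued_gap
    then show ?thesis using conj_definable_EqXor_if_two_valued_gap[OF T x] by blast
  next
    case nondistinct_gap
    then show ?thesis using conj_definable_EqOr_if_two_valued_subset[OF T x(1)
        nondistinct_gap(1) nondistinct_closed nondistinct_gap(2)] by blast
  qed
qed

lemma inj_map_closed_conj_definable:
  assumes R: "order_peak_closed k R"
    and no_EqXor: "\<not> conj_definable k R 3 EqXor"
    and no_EqOr: "\<forall>m\<ge>3. \<not> conj_definable k R m (EqOr m)"
  shows "conj_definable k R n T \<Longrightarrow> inj_map_closed T"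
proof (induction n arbitrary: T rule: less_induct)
  case (less n)
  have T: "order_peak_closed n T" using order_peak_closed_conj_definable[OF R less.prems] .
  then have len: "length z = n" if "z \<in> T" for z using that unfolding order_peak_closed_def by blast
  have nondistinct_closed: "\<forall>z\<in>T. \<not> distinct z \<longrightarrow> (\<forall>g. inj_on g (set z) \<longrightarrow> map g z \<in> T)"
  proof (intro ballI impI allI)
    fix z and g :: "rat \<Rightarrow> rat" assume z: "z \<in> T" "\<not> distinct z" and g: "inj_on g (set z)"
    have "card (set z) < n" using z len not_distinct_iff_card_less by metis
    then show "map g z \<in> T"
      using conj_definable_map_mem_via_remdups[OF less.prems z(1) len[OF z(1)] g] less.IH by blast
  qed
  show ?case unfolding inj_map_closed_def
  proof (intro ballI allI impI)
    fix x and g :: "rat \<Rightarrow> rat" assume x: "x \<in> T" and g: "inj_on g (set x)"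
    show "map g x \<in> T"
    proof (cases "distinct x")
      case False
      then show ?thesis using nondistinct_closed x g by blast
    next
      case True
      moreover have "length (map g x) = n" "distinct (map g x)"
        using True g len[OF x] by (simp_all add: distinct_map)
      ultimately show ?thesis
        using conj_definable_EqXor_or_EqOr_if_distinct_gap[OF T less.prems nondistinct_closed x]
          no_EqXor no_EqOr by blast
    qed
  qed
qed

theorem lemma4p7:
  fixes \<Gamma> :: tstructure
  assumes "temporal_language \<Gamma>"
    and "preserves peak \<Gamma>"
    and "\<not> pp_defines \<Gamma> 3 EqXor"
    and "\<forall>n \<ge> 3. \<not> pp_defines \<Gamma> n (EqOr n)"
  shows "\<forall>f :: rat \<Rightarrow> rat. bij f \<longrightarrow> preserves f \<Gamma>"
proof (intro allI impI)
  fix f :: "rat \<Rightarrow> rat" assume "bij f"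
  have "map f t \<in> R" if kR: "(k, R) \<in> set \<Gamma>" and t: "t \<in> R" for k R t
  proof -
    obtain i where i: "i < length \<Gamma>" "\<Gamma> ! i = (k, R)" using kR by (auto simp: in_set_conv_nth)
    have R: "order_peak_closed k R" using order_peak_closed_relation[OF assms(1,2) kR] .
    have "\<not> conj_definable k R 3 EqXor" "\<forall>m\<ge>3. \<not> conj_definable k R m (EqOr m)"
      using pp_defines_conj_definable[OF i] assms(3,4) by blast+
    moreover have "conj_definable k R k R"
      using R by (intro conj_definable_self) (simp add: order_peak_closed_def)
    ultimately have "inj_map_closed R" using inj_map_closed_conj_definable[OF R] by blast
    then show ?thesis
      using t inj_on_subset[OF bij_is_inj[OF \<open>bij f\<close>]] unfolding inj_map_closed_def by blast
  qed
  then show "preserves f \<Gamma>" unfolding preserves_def by blast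
qed

end
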